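(* For every graph $G$, every spanning forest $T$ of $G$, and every edge $f_0\in E(T)$, there exists a coloring $\varphi: C^*(T,f_0)\setminus\{f_0\}\to\{1,\dots,9\}$ such that for every edge $f\in E(T)$ with $C^*(T,f)\cap(C^*(T,f_0)\setminus\{f_0\})\neq\emptyset$ there exists a color $i\in\{1,\dots,8\}$ which occurs an odd number of times on $C^*(T,f)\cap(C^*(T,f_0)\setminus\{f_0\})$.
   Context: A spanning forest of $G$ is a maximal acyclic subgraph. For a spanning forest $T$ of $G$ and $f\in E(T)$, deleting $f$ from $T$ splits the component of $T$ containing $f$ into two components; the fundamental cut $C^*(T,f)$ is the set of all edges of $G$ joining the vertex sets of these two components (in particular $f\in C^*(T,f)$). *)

theory Defs
  imports Main
begin

text \<open>A finite graph (multigraph; parallel edges and loops allowed) is given by a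
vertex set V, an edge set E and an incidence map ends assigning to each edge
its set of one (loop) or two end vertices.\<close>

definition graph :: "'v set \<Rightarrow> 'e set \<Rightarrow> ('e \<Rightarrow> 'v set) \<Rightarrow> bool" where
  "graph V E ends \<longleftrightarrow> finite V \<and> finite E \<and>
     (\<forall>e\<in>E. ends e \<subseteq> V \<and> (card (ends e) = 1 \<or> card (ends e) = 2))"

definition is_cycle :: "('e \<Rightarrow> 'v set) \<Rightarrow> 'e set \<Rightarrow> 'v list \<Rightarrow> 'e list \<Rightarrow> bool" where
  "is_cycle ends F vs es \<longleftrightarrow> length vs = length es \<and> length es \<ge> 1 \<and>
     distinct vs \<and> distinct es \<and> set es \<subseteq> F \<and>
     (\<forall>i < length es. ends (es ! i) = {vs ! i, vs ! ((i + 1) mod length vs)})"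

definition acyclic_edges :: "('e \<Rightarrow> 'v set) \<Rightarrow> 'e set \<Rightarrow> bool" where
  "acyclic_edges ends F \<longleftrightarrow> \<not> (\<exists>vs es. is_cycle ends F vs es)"

definition spanning_forest :: "'v set \<Rightarrow> 'e set \<Rightarrow> ('e \<Rightarrow> 'v set) \<Rightarrow> 'e set \<Rightarrow> bool" where
  "spanning_forest V E ends T \<longleftrightarrow> T \<subseteq> E \<and> acyclic_edges ends T \<and>
     (\<forall>e \<in> E - T. \<not> acyclic_edges ends (insert e T))"

definition adj_rel :: "('e \<Rightarrow> 'v set) \<Rightarrow> 'e set \<Rightarrow> ('v \<times> 'v) set" where
  "adj_rel ends F = {(u, w). \<exists>e \<in> F. ends e = {u, w}}"

definition component :: "'v set \<Rightarrow> ('e \<Rightarrow> 'v set) \<Rightarrow> 'e set \<Rightarrow> 'v \<Rightarrow> 'v set" where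
  "component V ends F x = {y \<in> V. (x, y) \<in> (adj_rel ends F)\<^sup>*}"

definition fund_cut :: "'v set \<Rightarrow> 'e set \<Rightarrow> ('e \<Rightarrow> 'v set) \<Rightarrow> 'e set \<Rightarrow> 'e \<Rightarrow> 'e set" where
  "fund_cut V E ends T f = {e \<in> E. \<exists>u w a b. ends f = {u, w} \<and>
      a \<in> component V ends (T - {f}) u \<and> b \<in> component V ends (T - {f}) w \<and>
      ends e = {a, b}}"

end

theory Submission
  imports Defs "HOL-Library.Z2" "HOL-Library.Product_Plus" "HOL-Library.Disjoint_Sets"
begin

text \<open>
  Let \<open>D = C*(T,f\<^sub>0) - f\<^sub>0\<close> and let \<open>X\<close>, \<open>Y\<close> be the vertex sets of the two components
  of \<open>T - f\<^sub>0\<close>; every edge of \<open>D\<close> has one end in \<open>X\<close> and one in \<open>Y\<close>. Seen from an end \<open>u\<close>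
  of \<open>f\<^sub>0\<close>, each edge \<open>f\<close> of \<open>T\<close> cuts off a set of vertices, and \<open>C*(T,f) \<inter> D\<close> consists of
  the edges of \<open>D\<close> with an end in it. These vertex sets form a laminar family and each lies
  inside \<open>X\<close> or inside \<open>Y\<close>, so the sets \<open>C*(T,f) \<inter> D\<close> form the union of two laminar families
  \<open>L\<^sub>1\<close>, \<open>L\<^sub>2\<close> on \<open>D\<close>.

  Colour with the Klein four-group \<open>\<int>\<^sub>2 \<times> \<int>\<^sub>2\<close>. If every member of a laminar family \<open>L\<close> that
  lies inside \<open>B\<close> has odd size, then \<open>D\<close> has a colouring by nonzero vectors, avoiding
  \<open>(1,1)\<close> on \<open>B\<close>, under which every member of \<open>L\<close> has nonzero colour sum: split off a maximal
  member and induct. The minimal even members of a laminar family are pairwise disjoint, and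
  given two families of pairwise disjoint sets of size at least two, there is a set \<open>R\<close> meeting
  every set of the first family and containing no set of the second. Applying the colouring lemma to \<open>L\<^sub>1\<close> with
  \<open>B = D - R\<close> and to \<open>L\<^sub>2\<close> with \<open>B = R\<close> gives a pair of colourings that never takes the value
  \<open>((1,1),(1,1))\<close>, so only 8 colour pairs occur; a nonzero sum over a set forces one of them to
  occur an odd number of times on it.
\<close>

section \<open>Colourings by the Klein four-group\<close>

type_synonym klein4 = "bit \<times> bit"

lemma klein4_add_self [simp]: "(v::klein4) + v = 0"
proof -
  have "(b::bit) + b = 0" for b by (cases b) simp_all
  then show ?thesis by (cases v) (simp add: zero_prod_def)
qed

lemma klein4_cases: "(v::klein4) = (0,0) \<or> v = (1,0) \<or> v = (0,1) \<or> v = (1,1)"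
  by (cases v) (metis bit_not_zero_iff)

lemma klein4_add_eq_0_iff: "(s::klein4) + t = 0 \<longleftrightarrow> s = t"
  by (metis add.assoc add.right_neutral klein4_add_self)

lemma klein4_sum_const: "finite S \<Longrightarrow> (\<Sum>_\<in>S. v) = (if odd (card S) then v else (0::klein4))"
  by (induction S rule: finite_induct) auto

definition basis_vector :: "klein4 \<Rightarrow> bool" where
  "basis_vector v \<longleftrightarrow> v = (1,0) \<or> v = (0,1)"

lemma basis_vector_ne: "t \<noteq> 0 \<Longrightarrow> \<exists>p. basis_vector p \<and> p \<noteq> t"
  unfolding basis_vector_def by auto

lemma basis_vector_nonzero: "basis_vector v \<Longrightarrow> v \<noteq> 0"
  unfolding basis_vector_def by (auto simp: zero_prod_def)

lemma sum_basis_vectors_odd: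
  assumes "finite S" "\<forall>x\<in>S. basis_vector (c x)" "odd (card S)"
  shows "sum c S \<noteq> 0"
proof
  assume "sum c S = 0"
  then have "fst (sum c S) + snd (sum c S) = 0" by simp
  moreover have "fst (sum c S) + snd (sum c S) = (\<Sum>x\<in>S. fst (c x) + snd (c x))"
    by (simp only: fst_sum snd_sum sum.distrib)
  moreover have "\<dots> = (\<Sum>x\<in>S. 1)"
    using assms(2) unfolding basis_vector_def by (intro sum.cong) auto
  moreover have "(\<Sum>x\<in>S. 1) = (1::bit)"
    using assms(1,3) by (induction S rule: finite_induct) auto
  ultimately show False by simp
qed

lemma sum_nonzero_odd_fibre:
  assumes "finite S" "sum c S \<noteq> (0::klein4)" "\<And>x y. x \<in> S \<Longrightarrow> y \<in> S \<Longrightarrow> \<phi> x = \<phi> y \<Longrightarrow> c x = c y"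
  shows "\<exists>i\<in>\<phi> ` S. odd (card {y\<in>S. \<phi> y = i})"
proof (rule ccontr)
  assume even: "\<not> ?thesis"
  have "sum c {y\<in>S. \<phi> y = i} = 0" if i: "i \<in> \<phi> ` S" for i
  proof -
    obtain x where x: "x \<in> S" "\<phi> x = i" using i by blast
    have "sum c {y\<in>S. \<phi> y = i} = (\<Sum>_\<in>{y\<in>S. \<phi> y = i}. c x)"
    proof (rule sum.cong)
      fix y assume "y \<in> {y\<in>S. \<phi> y = i}"
      then show "c y = c x" using assms(3)[of y x] x by simp
    qed simp
    also have "\<dots> = 0"
      using klein4_sum_const[of "{y\<in>S. \<phi> y = i}" "c x"] assms(1) even i by auto
    finally show ?thesis .
  qed
  then have "sum c S = 0" using sum.image_gen[OF assms(1), of c \<phi>] by simp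
  with assms(2) show False ..
qed

definition laminar :: "'a set set \<Rightarrow> bool" where
  "laminar L \<longleftrightarrow> (\<forall>S\<in>L. \<forall>S'\<in>L. S \<subseteq> S' \<or> S' \<subseteq> S \<or> S \<inter> S' = {})"

lemma laminar_subset: "laminar L \<Longrightarrow> L' \<subseteq> L \<Longrightarrow> laminar L'"
  unfolding laminar_def by blast

definition nonvanishing :: "'a set set \<Rightarrow> 'a set \<Rightarrow> 'a set \<Rightarrow> ('a \<Rightarrow> klein4) \<Rightarrow> bool" where
  "nonvanishing L B U c \<longleftrightarrow>
     (\<forall>x\<in>U. c x \<noteq> 0 \<and> (x \<in> B \<longrightarrow> c x \<noteq> (1,1))) \<and> (\<forall>S\<in>L. S \<subseteq> U \<longrightarrow> sum c S \<noteq> 0)"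

lemma nonvanishing_glue:
  assumes "finite P" "finite Q" "P \<inter> Q = {}"
    and c1: "nonvanishing L B P c1" and c2: "nonvanishing L B Q c2"
    and "\<forall>S\<in>L. S \<subseteq> P \<union> Q \<longrightarrow> S \<subseteq> P \<or> S \<subseteq> Q"
  shows "\<exists>c. nonvanishing L B (P \<union> Q) c \<and> sum c (P \<union> Q) = sum c1 P + sum c2 Q"
proof (intro exI conjI)
  let ?c = "\<lambda>x. if x \<in> P then c1 x else c2 x"
  have on_P: "sum ?c S = sum c1 S" if "S \<subseteq> P" for S
    using that by (intro sum.cong) auto
  have on_Q: "sum ?c S = sum c2 S" if "S \<subseteq> Q" for S
    using that assms(3) by (intro sum.cong) auto
  have "sum ?c S \<noteq> 0" if S: "S \<in> L" "S \<subseteq> P \<union> Q" for S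
  proof -
    consider "S \<subseteq> P" | "S \<subseteq> Q" using S assms(6) by blast
    then show ?thesis
    proof cases
      case 1
      then show ?thesis using on_P[OF 1] c1 S(1) unfolding nonvanishing_def by simp
    next
      case 2
      then show ?thesis using on_Q[OF 2] c2 S(1) unfolding nonvanishing_def by simp
    qed
  qed
  moreover have "?c x \<noteq> 0 \<and> (x \<in> B \<longrightarrow> ?c x \<noteq> (1,1))" if "x \<in> P \<union> Q" for x
    using that c1 c2 unfolding nonvanishing_def by (cases "x \<in> P") auto
  ultimately show "nonvanishing L B (P \<union> Q) ?c"
    unfolding nonvanishing_def by blast
  show "sum ?c (P \<union> Q) = sum c1 P + sum c2 Q"
    using assms(1-3) on_P[of P] on_Q[of Q] by (simp add: sum.union_disjoint)
qed

lemma nonvanishing_basis_vectors: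
  assumes "finite U" "U \<subseteq> B" "\<forall>S\<in>L. S \<subseteq> B \<longrightarrow> odd (card S)" "\<forall>x\<in>U. basis_vector (c x)"
  shows "nonvanishing L B U c"
proof -
  have "sum c S \<noteq> 0" if "S \<in> L" "S \<subseteq> U" for S
    using that assms by (intro sum_basis_vectors_odd) (auto intro: finite_subset)
  moreover have "c x \<noteq> 0 \<and> c x \<noteq> (1,1)" if "x \<in> U" for x
    using that assms(4) basis_vector_nonzero unfolding basis_vector_def by auto
  ultimately show ?thesis unfolding nonvanishing_def by blast
qed

lemma nonvanishing_sum_avoiding:
  assumes "finite Q" "{} \<notin> L" "\<forall>S\<in>L. S \<subseteq> B \<longrightarrow> odd (card S)" "t \<noteq> 0"
    and "\<And>s. \<not> Q \<subseteq> B \<Longrightarrow> s \<noteq> 0 \<Longrightarrow> \<exists>c. nonvanishing L B Q c \<and> sum c Q = s"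
  shows "\<exists>c. nonvanishing L B Q c \<and> sum c Q \<noteq> t"
proof -
  consider "Q = {}" | "Q \<noteq> {}" "Q \<subseteq> B" | "\<not> Q \<subseteq> B" by blast
  then show ?thesis
  proof cases
    case 1
    then have "nonvanishing L B Q (\<lambda>_. 0)" using assms(2) unfolding nonvanishing_def by auto
    then show ?thesis using 1 assms(4) by auto
  next
    case 2
    then obtain q where q: "q \<in> Q" by auto
    define c1 where "c1 = (\<lambda>_::'a. (1::bit, 0::bit))"
    define c2 where "c2 = c1(q := (0, 1))"
    have "nonvanishing L B Q c1" "nonvanishing L B Q c2"
      using nonvanishing_basis_vectors[OF assms(1) 2(2) assms(3)]
      by (auto simp: c1_def c2_def basis_vector_def)
    moreover have "sum c1 Q \<noteq> sum c2 Q"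
    proof
      assume "sum c1 Q = sum c2 Q"
      moreover have "sum c2 (Q - {q}) = sum c1 (Q - {q})" unfolding c2_def by (intro sum.cong) auto
      ultimately have "c1 q = c2 q" using q assms(1) by (simp add: sum.remove)
      then show False unfolding c1_def c2_def by simp
    qed
    ultimately show ?thesis by metis
  next
    case 3
    obtain s where "basis_vector s" "s \<noteq> t" using basis_vector_ne[OF assms(4)] by blast
    then show ?thesis using assms(5)[OF 3] basis_vector_nonzero by blast
  qed
qed

lemma laminar_maximal_piece:
  assumes "finite U" "laminar L" "{} \<notin> L" "U \<notin> L" "\<not> U \<subseteq> B"
  obtains P where "P \<subseteq> U" "P \<noteq> {}" "\<forall>S\<in>L. S \<subseteq> U \<longrightarrow> S \<subseteq> P \<or> S \<subseteq> U - P"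
    and "P \<in> L \<and> P \<subset> U \<or> (\<exists>x. P = {x} \<and> x \<notin> B \<and> P \<notin> L)"
proof (cases "\<exists>S\<in>L. S \<subseteq> U")
  case True
  have "finite {S\<in>L. S \<subseteq> U}" using assms(1) by (auto intro: finite_subset[of _ "Pow U"])
  then have "\<exists>M\<in>{S\<in>L. S \<subseteq> U}. \<forall>S\<in>{S\<in>L. S \<subseteq> U}. M \<subseteq> S \<longrightarrow> M = S"
    using True by (intro finite_has_maximal) auto
  then obtain M where M: "M \<in> L" "M \<subseteq> U" "\<forall>S\<in>L. S \<subseteq> U \<longrightarrow> M \<subseteq> S \<longrightarrow> M = S"
    by auto
  show ?thesis
  proof (rule that[of M])
    show "\<forall>S\<in>L. S \<subseteq> U \<longrightarrow> S \<subseteq> M \<or> S \<subseteq> U - M"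
      using M assms(2) unfolding laminar_def by blast
  qed (use M assms(3,4) in auto)
next
  case False
  obtain x where "x \<in> U" "x \<notin> B" using assms(5) by auto
  then show ?thesis using False by (intro that[of "{x}"]) auto
qed

lemma nonvanishing_two_pieces:
  assumes fin: "finite P" "finite Q" and disj: "P \<inter> Q = {}"
    and split: "\<forall>S\<in>L. S \<subseteq> P \<union> Q \<longrightarrow> S \<subseteq> P \<or> S \<subseteq> Q"
    and "{} \<notin> L" and odd: "\<forall>S\<in>L. S \<subseteq> B \<longrightarrow> odd (card S)" and "\<not> P \<union> Q \<subseteq> B" "t \<noteq> 0"
    and P_in_L: "P \<subseteq> B \<Longrightarrow> P \<in> L"
    and colour_P: "\<And>s. \<not> P \<subseteq> B \<Longrightarrow> s \<noteq> 0 \<Longrightarrow> \<exists>c. nonvanishing L B P c \<and> sum c P = s"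
    and colour_Q: "\<And>s. \<not> Q \<subseteq> B \<Longrightarrow> s \<noteq> 0 \<Longrightarrow> \<exists>c. nonvanishing L B Q c \<and> sum c Q = s"
  shows "\<exists>c. nonvanishing L B (P \<union> Q) c \<and> sum c (P \<union> Q) = t"
proof (cases "P \<subseteq> B")
  case True
  obtain p where p: "basis_vector p" "p \<noteq> t" using basis_vector_ne[OF \<open>t \<noteq> 0\<close>] by blast
  have cP: "nonvanishing L B P (\<lambda>_. p)"
    using nonvanishing_basis_vectors[OF fin(1) True odd] p(1) by auto
  have sP: "(\<Sum>_\<in>P. p) = p" using klein4_sum_const[OF fin(1)] odd True P_in_L by auto
  have "\<not> Q \<subseteq> B" using \<open>\<not> P \<union> Q \<subseteq> B\<close> True by auto
  moreover have "t + p \<noteq> 0" using p(2) klein4_add_eq_0_iff by auto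
  ultimately obtain cQ where cQ: "nonvanishing L B Q cQ" "sum cQ Q = t + p" using colour_Q by blast
  have "p + (t + p) = t" by (simp add: add.left_commute[of p t p])
  then show ?thesis using nonvanishing_glue[OF fin disj cP cQ(1) split] sP cQ(2) by auto
next
  case False
  obtain cQ where cQ: "nonvanishing L B Q cQ" "sum cQ Q \<noteq> t"
    using nonvanishing_sum_avoiding[OF fin(2) \<open>{} \<notin> L\<close> odd \<open>t \<noteq> 0\<close> colour_Q] by blast
  then have "t + sum cQ Q \<noteq> 0" using klein4_add_eq_0_iff by auto
  then obtain cP where cP: "nonvanishing L B P cP" "sum cP P = t + sum cQ Q"
    using colour_P False by blast
  have "(t + sum cQ Q) + sum cQ Q = t" by (simp add: add.assoc)
  then show ?thesis using nonvanishing_glue[OF fin disj cP(1) cQ(1) split] cP(2) by auto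
qed

lemma nonvanishing_with_sum:
  assumes "finite U" "laminar L" "{} \<notin> L" "\<forall>S\<in>L. S \<subseteq> B \<longrightarrow> odd (card S)"
    and "\<not> U \<subseteq> B" "t \<noteq> 0"
  shows "\<exists>c. nonvanishing L B U c \<and> sum c U = t"
  using assms
proof (induction "card U + card {S\<in>L. S \<subseteq> U}" arbitrary: U L t rule: less_induct)
  case less
  have finL: "finite {S\<in>L. S \<subseteq> U}" using less.prems(1) by (auto intro: finite_subset[of _ "Pow U"])
  show ?case
  proof (cases "U \<in> L")
    case True
    have "card {S\<in>L - {U}. S \<subseteq> U} < card {S\<in>L. S \<subseteq> U}"
      using finL True by (intro psubset_card_mono) auto
    then obtain c where "nonvanishing (L - {U}) B U c" "sum c U = t"
      using less.hyps[of U "L - {U}" t] less.prems laminar_subset[of L "L - {U}"] by auto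
    with less.prems(6) show ?thesis unfolding nonvanishing_def by auto
  next
    case False
    obtain P where P: "P \<subseteq> U" "P \<noteq> {}" and split: "\<forall>S\<in>L. S \<subseteq> U \<longrightarrow> S \<subseteq> P \<or> S \<subseteq> U - P"
      and piece: "P \<in> L \<and> P \<subset> U \<or> (\<exists>x. P = {x} \<and> x \<notin> B \<and> P \<notin> L)"
      using laminar_maximal_piece[OF less.prems(1-3) False less.prems(5)] by blast
    have IH: "\<exists>c. nonvanishing L B U' c \<and> sum c U' = s" if "U' \<subset> U" "\<not> U' \<subseteq> B" "s \<noteq> 0" for U' s
    proof (rule less.hyps)
      have "card U' < card U" using that(1) less.prems(1) by (rule psubset_card_mono[rotated])
      moreover have "card {S\<in>L. S \<subseteq> U'} \<le> card {S\<in>L. S \<subseteq> U}" using that(1) finL by (intro card_mono) auto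
      ultimately show "card U' + card {S\<in>L. S \<subseteq> U'} < card U + card {S\<in>L. S \<subseteq> U}" by linarith
    qed (use that less.prems finite_subset[of U' U] in auto)
    have colour_P: "\<exists>c. nonvanishing L B P c \<and> sum c P = s" if "\<not> P \<subseteq> B" "s \<noteq> 0" for s
      using piece
    proof
      assume "P \<in> L \<and> P \<subset> U"
      then show ?thesis using IH that by blast
    next
      assume "\<exists>x. P = {x} \<and> x \<notin> B \<and> P \<notin> L"
      then obtain x where "P = {x}" "x \<notin> B" "P \<notin> L" by blast
      then have "nonvanishing L B P (\<lambda>_. s)"
        using that(2) less.prems(3) unfolding nonvanishing_def by (auto simp: subset_singleton_iff)
      then show ?thesis using \<open>P = {x}\<close> by auto
    qed
    define Q where "Q = U - P"
    have U: "U = P \<union> Q" "P \<inter> Q = {}" and fin: "finite P" "finite Q"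
      using P less.prems(1) unfolding Q_def by (auto intro: finite_subset)
    have split': "\<forall>S\<in>L. S \<subseteq> P \<union> Q \<longrightarrow> S \<subseteq> P \<or> S \<subseteq> Q"
      using split U(1) unfolding Q_def by auto
    have colour_Q: "\<exists>c. nonvanishing L B Q c \<and> sum c Q = s" if "\<not> Q \<subseteq> B" "s \<noteq> 0" for s
      using IH[of Q s] that P(1,2) unfolding Q_def by blast
    have "\<not> P \<union> Q \<subseteq> B" using less.prems(5) U(1) by simp
    moreover have "P \<subseteq> B \<Longrightarrow> P \<in> L" using piece by auto
    ultimately have "\<exists>c. nonvanishing L B (P \<union> Q) c \<and> sum c (P \<union> Q) = t"
      using colour_P colour_Q by (rule nonvanishing_two_pieces[OF fin U(2) split' less.prems(3,4) _ less.prems(6)])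
    then show ?thesis using U(1) by simp
  qed
qed

lemma nonvanishing_exists:
  assumes "finite U" "laminar L" "{} \<notin> L" "\<forall>S\<in>L. S \<subseteq> B \<longrightarrow> odd (card S)"
  shows "\<exists>c. nonvanishing L B U c"
proof (cases "U \<subseteq> B")
  case True
  have "nonvanishing L B U (\<lambda>_. (1, 0))"
    by (rule nonvanishing_basis_vectors[OF assms(1) True assms(4)]) (simp add: basis_vector_def)
  then show ?thesis by blast
next
  case False
  have "((1, 0) :: klein4) \<noteq> 0" by (simp add: zero_prod_def)
  then show ?thesis using nonvanishing_with_sum[OF assms False] by blast
qed

section \<open>Transversals of two matchings\<close>

definition matching_on :: "'a set \<Rightarrow> 'a set set \<Rightarrow> bool" where
  "matching_on D M \<longleftrightarrow> disjoint M \<and> (\<forall>P\<in>M. P \<subseteq> D \<and> card P = 2)"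

definition transversal_avoiding :: "'a set \<Rightarrow> 'a set set \<Rightarrow> 'a set set \<Rightarrow> bool" where
  "transversal_avoiding Y M N \<longleftrightarrow> (\<forall>E\<in>M. E \<inter> Y \<noteq> {}) \<and> (\<forall>F\<in>N. \<not> F \<subseteq> Y)"

lemma matching_onD:
  assumes "matching_on D M" "P \<in> M"
  shows "P \<subseteq> D" "\<exists>a b. P = {a, b} \<and> a \<noteq> b"
  using assms unfolding matching_on_def by (auto simp: card_2_iff)

lemma matching_on_disjoint:
  "matching_on D M \<Longrightarrow> P \<in> M \<Longrightarrow> P' \<in> M \<Longrightarrow> P \<noteq> P' \<Longrightarrow> P \<inter> P' = {}"
  unfolding matching_on_def disjoint_def by blast

lemma matching_on_subset:
  "matching_on D M \<Longrightarrow> M' \<subseteq> M \<Longrightarrow> \<forall>P\<in>M'. P \<subseteq> D' \<Longrightarrow> matching_on D' M'"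
  unfolding matching_on_def by (auto intro: pairwise_subset)

lemma transversal_step_simple:
  assumes M: "matching_on D M" and N: "matching_on D N"
    and "E0 \<in> M" "x \<in> E0" and free: "\<forall>F\<in>N. x \<in> F \<longrightarrow> (\<forall>E\<in>M - {E0}. E \<inter> F = {})"
    and IH: "\<And>D' M' N'. D' \<subset> D \<Longrightarrow> matching_on D' M' \<Longrightarrow> matching_on D' N' \<Longrightarrow>
               \<exists>Y\<subseteq>D'. transversal_avoiding Y M' N'"
  shows "\<exists>Y\<subseteq>D. transversal_avoiding Y M N"
proof -
  define K where "K = E0 \<union> \<Union>{F\<in>N. x \<in> F}"
  have K: "E0 \<subseteq> K" "\<And>F. F \<in> N \<Longrightarrow> x \<in> F \<Longrightarrow> F \<subseteq> K" unfolding K_def by blast+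
  have K_cases: "z \<in> E0 \<or> (\<exists>F\<in>N. x \<in> F \<and> z \<in> F)" if "z \<in> K" for z
    using that unfolding K_def by blast
  have "x \<in> D" using matching_onD(1)[OF M \<open>E0 \<in> M\<close>] \<open>x \<in> E0\<close> by blast
  then have smaller: "D - K \<subset> D" using K(1) \<open>x \<in> E0\<close> by blast
  have M': "matching_on (D - K) (M - {E0})"
  proof (rule matching_on_subset[OF M])
    show "\<forall>E\<in>M - {E0}. E \<subseteq> D - K"
    proof
      fix E assume E: "E \<in> M - {E0}"
      then have "E \<inter> E0 = {}" using matching_on_disjoint[OF M _ \<open>E0 \<in> M\<close>] by blast
      moreover have "E \<inter> F = {}" if "F \<in> N" "x \<in> F" for F using free E that by simp
      ultimately have "z \<notin> K" if "z \<in> E" for z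
        using K_cases[of z] that by blast
      then show "E \<subseteq> D - K" using matching_onD(1)[OF M, of E] E by auto
    qed
  qed blast
  have N': "matching_on (D - K) {F\<in>N. F \<inter> K = {}}"
    using matching_onD(1)[OF N] by (intro matching_on_subset[OF N]) blast+
  obtain Y where Y: "Y \<subseteq> D - K" "transversal_avoiding Y (M - {E0}) {F\<in>N. F \<inter> K = {}}"
    using IH[OF smaller M' N'] by blast
  have "\<not> F \<subseteq> insert x Y" if "F \<in> N" for F
  proof (cases "F \<inter> K = {}")
    case True
    then have "\<not> F \<subseteq> Y" using Y(2) that unfolding transversal_avoiding_def by blast
    moreover have "x \<notin> F" using True K(1) \<open>x \<in> E0\<close> by blast
    ultimately show ?thesis by blast
  next
    case False
    have "\<exists>z\<in>F \<inter> K. z \<noteq> x"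
    proof (cases "x \<in> F")
      case True
      then obtain z where "F = {x, z}" "z \<noteq> x" using matching_onD(2)[OF N \<open>F \<in> N\<close>] by blast
      then show ?thesis using K(2)[OF \<open>F \<in> N\<close> True] by blast
    next
      case False
      then show ?thesis using \<open>F \<inter> K \<noteq> {}\<close> by auto
    qed
    then show ?thesis using Y(1) by blast
  qed
  moreover have "E \<inter> insert x Y \<noteq> {}" if "E \<in> M" for E
    using Y(2) that \<open>x \<in> E0\<close> unfolding transversal_avoiding_def by (cases "E = E0") auto
  moreover have "insert x Y \<subseteq> D" using Y(1) \<open>x \<in> D\<close> by blast
  ultimately show ?thesis unfolding transversal_avoiding_def by blast
qed

lemma matching_on_merge:
  assumes M: "matching_on D M" and E0: "{x, y} \<in> M" and E1: "{x', z} \<in> M"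
    and "x \<noteq> y" "x' \<noteq> z" "{x', z} \<noteq> {x, y}"
  shows "matching_on (D - {x, x'}) (insert {y, z} (M - {{x, y}, {x', z}}))"
proof -
  let ?M = "insert {y, z} (M - {{x, y}, {x', z}})"
  have "{x, y} \<inter> {x', z} = {}" using matching_on_disjoint[OF M E0 E1] assms(6) by blast
  then have neq: "x \<noteq> z" "y \<noteq> x'" "y \<noteq> z" by auto
  have away: "E \<inter> {x, y} = {} \<and> E \<inter> {x', z} = {}" if "E \<in> M - {{x, y}, {x', z}}" for E
    using that matching_on_disjoint[OF M _ E0] matching_on_disjoint[OF M _ E1] by blast
  have "disjoint (M - {{x, y}, {x', z}})" using M unfolding matching_on_def by (auto intro: pairwise_subset)
  moreover have "{y, z} \<inter> E = {}" if "E \<in> M - {{x, y}, {x', z}}" for E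
    using away[OF that] by blast
  ultimately have "disjoint ?M" by (auto simp: pairwise_insert disjnt_def)
  moreover have "E \<subseteq> D - {x, x'} \<and> card E = 2" if E: "E \<in> ?M" for E
  proof -
    consider "E = {y, z}" | "E \<in> M - {{x, y}, {x', z}}" using E by blast
    then show ?thesis
    proof cases
      case 1
      have "y \<in> D" "z \<in> D" using matching_onD(1)[OF M E0] matching_onD(1)[OF M E1] by auto
      then show ?thesis using 1 neq \<open>x \<noteq> y\<close> \<open>x' \<noteq> z\<close> by auto
    next
      case 2
      then show ?thesis using away[OF 2] M unfolding matching_on_def by blast
    qed
  qed
  ultimately show ?thesis unfolding matching_on_def by blast
qed

lemma transversal_step_merge:
  assumes M: "matching_on D M" and N: "matching_on D N"
    and E0: "{x, y} \<in> M" and F0: "{x, x'} \<in> N" and E1: "{x', z} \<in> M"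
    and "x \<noteq> y" "x \<noteq> x'" "x' \<noteq> z" "{x', z} \<noteq> {x, y}"
    and IH: "\<And>D' M' N'. D' \<subset> D \<Longrightarrow> matching_on D' M' \<Longrightarrow> matching_on D' N' \<Longrightarrow>
               \<exists>Y\<subseteq>D'. transversal_avoiding Y M' N'"
  shows "\<exists>Y\<subseteq>D. transversal_avoiding Y M N"
proof -
  have in_D: "x \<in> D" "x' \<in> D" using matching_onD(1)[OF N F0] by auto
  then have smaller: "D - {x, x'} \<subset> D" by blast
  have M': "matching_on (D - {x, x'}) (insert {y, z} (M - {{x, y}, {x', z}}))"
    using matching_on_merge[OF M E0 E1] assms(6,8,9) .
  have N': "matching_on (D - {x, x'}) (N - {{x, x'}})"
  proof (rule matching_on_subset[OF N])
    show "\<forall>F\<in>N - {{x, x'}}. F \<subseteq> D - {x, x'}"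
      using matching_on_disjoint[OF N _ F0] matching_onD(1)[OF N] by blast
  qed auto
  obtain Y where Y: "Y \<subseteq> D - {x, x'}" "transversal_avoiding Y (insert {y, z} (M - {{x, y}, {x', z}})) (N - {{x, x'}})"
    using IH[OF smaller M' N'] by blast
  \<comment> \<open>the merged block tells which end of the N-block through x to add\<close>
  obtain v where v: "v \<in> {x, x'}" "{x, y} \<inter> insert v Y \<noteq> {}" "{x', z} \<inter> insert v Y \<noteq> {}"
  proof -
    have "{y, z} \<inter> Y \<noteq> {}" using Y(2) unfolding transversal_avoiding_def by blast
    then consider "y \<in> Y" | "z \<in> Y" by blast
    then show ?thesis
    proof cases
      case 1
      then show ?thesis using that[of x'] by blast
    next
      case 2
      then show ?thesis using that[of x] by blast
    qed
  qed
  have "E \<inter> insert v Y \<noteq> {}" if "E \<in> M" for E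
  proof (cases "E \<in> {{x, y}, {x', z}}")
    case True
    then show ?thesis using v by blast
  next
    case False
    then show ?thesis using Y(2) that unfolding transversal_avoiding_def by blast
  qed
  moreover have "\<not> F \<subseteq> insert v Y" if "F \<in> N" for F
  proof (cases "F = {x, x'}")
    case True
    then show ?thesis using v(1) Y(1) \<open>x \<noteq> x'\<close> by blast
  next
    case False
    then have "\<not> F \<subseteq> Y" using Y(2) that unfolding transversal_avoiding_def by blast
    moreover have "v \<notin> F" using matching_on_disjoint[OF N that F0] False v(1) by blast
    ultimately show ?thesis by blast
  qed
  moreover have "insert v Y \<subseteq> D" using v(1) Y(1) in_D by blast
  ultimately show ?thesis unfolding transversal_avoiding_def by blast
qed

lemma matching_transversal:
  assumes "finite D" "matching_on D M" "matching_on D N"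
  shows "\<exists>Y\<subseteq>D. transversal_avoiding Y M N"
  using assms
proof (induction D arbitrary: M N rule: finite_psubset_induct)
  case (psubset D)
  note M = psubset.prems(1) and N = psubset.prems(2)
  show ?case
  proof (cases "M = {}")
    case True
    have "F \<noteq> {}" if "F \<in> N" for F using matching_onD(2)[OF N that] by blast
    then show ?thesis using True unfolding transversal_avoiding_def by blast
  next
    case False
    then obtain x y where E0: "{x, y} \<in> M" "x \<noteq> y" using matching_onD(2)[OF M] by blast
    show ?thesis
    proof (cases "\<exists>F\<in>N. x \<in> F \<and> (\<exists>E\<in>M - {{x, y}}. E \<inter> F \<noteq> {})")
      case True
      then obtain F0 E1 where F0: "F0 \<in> N" "x \<in> F0" and E1: "E1 \<in> M" "E1 \<noteq> {x, y}" "E1 \<inter> F0 \<noteq> {}"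
        by blast
      obtain x' where x': "F0 = {x, x'}" "x \<noteq> x'"
        using matching_onD(2)[OF N F0(1)] F0(2) by (metis insert_commute insertE singletonD)
      have "E1 \<inter> {x, y} = {}" using matching_on_disjoint[OF M E1(1) E0(1) E1(2)] .
      then have "x' \<in> E1" using E1(3) x'(1) by blast
      then obtain z where z: "E1 = {x', z}" "x' \<noteq> z"
        using matching_onD(2)[OF M E1(1)] by (metis insert_commute insertE singletonD)
      have F0': "{x, x'} \<in> N" and E1': "{x', z} \<in> M" and E10: "{x', z} \<noteq> {x, y}"
        using F0(1) E1(1,2) x'(1) z(1) by simp_all
      show ?thesis
        by (rule transversal_step_merge[OF M N E0(1) F0' E1' E0(2) x'(2) z(2) E10 psubset.IH])
    next
      case False
      then have "\<forall>F\<in>N. x \<in> F \<longrightarrow> (\<forall>E\<in>M - {{x, y}}. E \<inter> F = {})" by blast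
      with insertI1 show ?thesis
        by (rule transversal_step_simple[OF M N E0(1) _ _ psubset.IH])
    qed
  qed
qed

lemma matching_on_image:
  assumes "disjoint A" "\<forall>S\<in>A. S \<subseteq> D \<and> pair S \<subseteq> S \<and> card (pair S) = 2"
  shows "matching_on D (pair ` A)"
proof -
  have "pair S \<inter> pair S' = {}" if "S \<in> A" "S' \<in> A" "pair S \<noteq> pair S'" for S S'
  proof -
    have "S \<noteq> S'" using that(3) by blast
    then have "S \<inter> S' = {}" using that(1,2) assms(1) unfolding disjoint_def by blast
    then show ?thesis using that(1,2) assms(2) by blast
  qed
  then have "disjoint (pair ` A)" unfolding disjoint_def by auto
  moreover have "P \<subseteq> D \<and> card P = 2" if "P \<in> pair ` A" for P
    using that assms(2) by auto
  ultimately show ?thesis unfolding matching_on_def by blast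
qed

lemma transversal_avoiding_exists:
  assumes "finite D" "disjoint M" "disjoint N" "\<forall>A\<in>M \<union> N. A \<subseteq> D \<and> 2 \<le> card A"
  shows "\<exists>Y\<subseteq>D. transversal_avoiding Y M N"
proof -
  have "\<forall>A\<in>M \<union> N. \<exists>P. P \<subseteq> A \<and> card P = 2"
  proof
    fix A assume "A \<in> M \<union> N"
    then have "2 \<le> card A" using assms(4) by blast
    then obtain P where "P \<subseteq> A" "card P = 2" by (rule obtain_subset_with_card_n)
    then show "\<exists>P. P \<subseteq> A \<and> card P = 2" by blast
  qed
  from bchoice[OF this] obtain pair where pair: "\<forall>A\<in>M \<union> N. pair A \<subseteq> A \<and> card (pair A) = 2"
    by blast
  have "matching_on D (pair ` M)"
    by (rule matching_on_image[OF assms(2)]) (use assms(4) pair in blast)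
  moreover have "matching_on D (pair ` N)"
    by (rule matching_on_image[OF assms(3)]) (use assms(4) pair in blast)
  ultimately obtain Y where Y: "Y \<subseteq> D" "transversal_avoiding Y (pair ` M) (pair ` N)"
    using matching_transversal[OF assms(1)] by blast
  have "E \<inter> Y \<noteq> {}" if "E \<in> M" for E
  proof -
    have "pair E \<inter> Y \<noteq> {}" using Y(2) that unfolding transversal_avoiding_def by simp
    then show ?thesis using pair that by blast
  qed
  moreover have "\<not> F \<subseteq> Y" if "F \<in> N" for F
  proof -
    have "\<not> pair F \<subseteq> Y" using Y(2) that unfolding transversal_avoiding_def by simp
    then show ?thesis using pair that by blast
  qed
  ultimately show ?thesis using Y(1) unfolding transversal_avoiding_def by blast
qed

section \<open>Eight colours for two laminar families\<close>

definition minimal_even :: "'a set set \<Rightarrow> 'a set set" where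
  "minimal_even L = {S\<in>L. even (card S) \<and> (\<forall>S'\<in>L. S' \<subset> S \<longrightarrow> odd (card S'))}"

lemma laminar_minimal_even_disjoint:
  assumes "laminar L"
  shows "disjoint (minimal_even L)"
  unfolding disjoint_def
proof (intro ballI impI)
  fix E E' assume E: "E \<in> minimal_even L" "E' \<in> minimal_even L" "E \<noteq> E'"
  then have "\<not> E \<subset> E'" "\<not> E' \<subset> E" unfolding minimal_even_def by auto
  moreover have "E \<subseteq> E' \<or> E' \<subseteq> E \<or> E \<inter> E' = {}"
    using assms E(1,2) unfolding laminar_def minimal_even_def by blast
  ultimately show "E \<inter> E' = {}" using E(3) by blast
qed

lemma odd_if_no_minimal_even_inside:
  assumes "finite D" "\<forall>S\<in>L. S \<subseteq> D" "\<forall>E\<in>minimal_even L. \<not> E \<subseteq> B"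
  shows "\<forall>S\<in>L. S \<subseteq> B \<longrightarrow> odd (card S)"
proof (intro ballI impI)
  fix S assume S: "S \<in> L" "S \<subseteq> B"
  show "odd (card S)"
  proof (rule ccontr)
    assume "\<not> odd (card S)"
    then have "S \<in> {S'\<in>L. S' \<subseteq> S \<and> even (card S')}" using S(1) by auto
    moreover have "finite {S'\<in>L. S' \<subseteq> S \<and> even (card S')}"
      using assms(1,2) by (auto intro: finite_subset[of _ "Pow D"])
    ultimately obtain E where E: "E \<in> L" "E \<subseteq> S" "even (card E)"
      and min: "\<forall>S'\<in>L. S' \<subseteq> S \<and> even (card S') \<longrightarrow> S' \<subseteq> E \<longrightarrow> E = S'"
      using finite_has_minimal2[of "{S'\<in>L. S' \<subseteq> S \<and> even (card S')}" S] by auto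
    have "E \<in> minimal_even L"
      unfolding minimal_even_def using E min by auto
    then show False using assms(3) E(2) S(2) by blast
  qed
qed

definition klein_index :: "klein4 \<Rightarrow> nat" where
  "klein_index v = (if v = (1,0) then 0 else if v = (0,1) then 1 else 2)"

text \<open>Pairs of nonzero vectors are numbered \<open>1..9\<close>; only \<open>((1,1),(1,1))\<close> gets \<open>9\<close>.\<close>

definition colour_code :: "klein4 \<Rightarrow> klein4 \<Rightarrow> nat" where
  "colour_code v w = 3 * klein_index v + klein_index w + 1"

lemma klein_index_le: "klein_index v \<le> 2"
  unfolding klein_index_def by auto

lemma klein_index_eq_2: "v \<noteq> 0 \<Longrightarrow> klein_index v = 2 \<Longrightarrow> v = (1,1)"
  using klein4_cases[of v] unfolding klein_index_def by (auto simp: zero_prod_def)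

lemma klein_index_inj: "v \<noteq> 0 \<Longrightarrow> w \<noteq> 0 \<Longrightarrow> klein_index v = klein_index w \<Longrightarrow> v = w"
  using klein4_cases[of v] klein4_cases[of w] unfolding klein_index_def by (auto simp: zero_prod_def)

lemma colour_code_inj:
  assumes "v \<noteq> 0" "w \<noteq> 0" "v' \<noteq> 0" "w' \<noteq> 0" "colour_code v w = colour_code v' w'"
  shows "v = v' \<and> w = w'"
proof -
  have decode: "klein_index a = (colour_code a b - 1) div 3" "klein_index b = (colour_code a b - 1) mod 3" for a b
    using klein_index_le[of b] unfolding colour_code_def by simp_all
  then have "klein_index v = klein_index v'" "klein_index w = klein_index w'"
    using assms(5) by metis+
  then show ?thesis using klein_index_inj assms(1-4) by blast
qed

lemma colour_code_range:
  assumes "v \<noteq> 0" "w \<noteq> 0" "(v, w) \<noteq> ((1,1), (1,1))"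
  shows "colour_code v w \<in> {1..8}"
proof -
  have "\<not> (klein_index v = 2 \<and> klein_index w = 2)" using assms klein_index_eq_2 by blast
  then show ?thesis using klein_index_le[of v] klein_index_le[of w] unfolding colour_code_def by auto
qed

lemma colour_code_mem:
  assumes "nonvanishing L1 (D - Y) D c1" "nonvanishing L2 Y D c2" "e \<in> D"
  shows "colour_code (c1 e) (c2 e) \<in> {1..8}"
proof (rule colour_code_range)
  show "c1 e \<noteq> 0" "c2 e \<noteq> 0" using assms unfolding nonvanishing_def by auto
  show "(c1 e, c2 e) \<noteq> ((1,1), (1,1))"
    using assms unfolding nonvanishing_def by (cases "e \<in> Y") auto
qed

lemma minimal_even_card_ge_2:
  assumes "finite D" "\<forall>S\<in>L. S \<subseteq> D" "{} \<notin> L" "E \<in> minimal_even L"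
  shows "E \<subseteq> D \<and> 2 \<le> card E"
proof -
  have "E \<in> L" "even (card E)" using assms(4) unfolding minimal_even_def by auto
  then have "E \<subseteq> D" "E \<noteq> {}" using assms(2,3) by auto
  moreover have "finite E" using \<open>E \<subseteq> D\<close> assms(1) by (rule finite_subset)
  ultimately have "card E \<noteq> 0" by simp
  with \<open>even (card E)\<close> have "2 \<le> card E" by presburger
  with \<open>E \<subseteq> D\<close> show ?thesis by blast
qed

lemma laminar_pair_parity_split:
  assumes "finite D" and lam: "laminar L1" "laminar L2" and sub: "\<forall>S\<in>L1 \<union> L2. S \<subseteq> D"
    and ne: "{} \<notin> L1" "{} \<notin> L2"
  obtains Y where "\<forall>S\<in>L1. S \<subseteq> D - Y \<longrightarrow> odd (card S)" "\<forall>S\<in>L2. S \<subseteq> Y \<longrightarrow> odd (card S)"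
proof -
  have sub1: "\<forall>S\<in>L1. S \<subseteq> D" and sub2: "\<forall>S\<in>L2. S \<subseteq> D" using sub by auto
  have "\<forall>A\<in>minimal_even L1 \<union> minimal_even L2. A \<subseteq> D \<and> 2 \<le> card A"
    using minimal_even_card_ge_2[OF assms(1) sub1 ne(1)] minimal_even_card_ge_2[OF assms(1) sub2 ne(2)]
    by blast
  then have "\<exists>Y\<subseteq>D. transversal_avoiding Y (minimal_even L1) (minimal_even L2)"
    by (rule transversal_avoiding_exists[OF assms(1) laminar_minimal_even_disjoint[OF lam(1)]
          laminar_minimal_even_disjoint[OF lam(2)]])
  then obtain Y where Y: "Y \<subseteq> D" "\<forall>E\<in>minimal_even L1. E \<inter> Y \<noteq> {}" "\<forall>F\<in>minimal_even L2. \<not> F \<subseteq> Y"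
    unfolding transversal_avoiding_def by blast
  have "\<forall>E\<in>minimal_even L1. \<not> E \<subseteq> D - Y" using Y(2) by blast
  then have "\<forall>S\<in>L1. S \<subseteq> D - Y \<longrightarrow> odd (card S)"
    by (rule odd_if_no_minimal_even_inside[OF assms(1) sub1])
  moreover have "\<forall>S\<in>L2. S \<subseteq> Y \<longrightarrow> odd (card S)"
    using Y(3) by (rule odd_if_no_minimal_even_inside[OF assms(1) sub2])
  ultimately show thesis by (rule that)
qed

theorem laminar_pair_odd_colouring:
  assumes "finite D" and lam: "laminar L1" "laminar L2" and sub: "\<forall>S\<in>L1 \<union> L2. S \<subseteq> D"
    and ne: "{} \<notin> L1" "{} \<notin> L2"
  shows "\<exists>\<phi>. (\<forall>e\<in>D. \<phi> e \<in> {1..8::nat}) \<and> (\<forall>S\<in>L1 \<union> L2. \<exists>i\<in>{1..8}. odd (card {e\<in>S. \<phi> e = i}))"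
proof -
  obtain Y where odd1: "\<forall>S\<in>L1. S \<subseteq> D - Y \<longrightarrow> odd (card S)" and odd2: "\<forall>S\<in>L2. S \<subseteq> Y \<longrightarrow> odd (card S)"
    using laminar_pair_parity_split[OF assms] .
  obtain c1 where c1: "nonvanishing L1 (D - Y) D c1"
    using nonvanishing_exists[OF assms(1) lam(1) ne(1) odd1] by blast
  obtain c2 where c2: "nonvanishing L2 Y D c2"
    using nonvanishing_exists[OF assms(1) lam(2) ne(2) odd2] by blast
  define \<phi> where "\<phi> e = colour_code (c1 e) (c2 e)" for e
  have range: "\<phi> e \<in> {1..8}" if "e \<in> D" for e
    unfolding \<phi>_def using colour_code_mem[OF c1 c2 that] .
  have nonzero: "c1 e \<noteq> 0" "c2 e \<noteq> 0" if "e \<in> D" for e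
    using c1 c2 that unfolding nonvanishing_def by auto
  have fibres: "c1 x = c1 y" "c2 x = c2 y" if "x \<in> D" "y \<in> D" "\<phi> x = \<phi> y" for x y
    using colour_code_inj nonzero that unfolding \<phi>_def by blast+
  have "\<exists>i\<in>{1..8}. odd (card {e\<in>S. \<phi> e = i})" if S: "S \<in> L1 \<union> L2" for S
  proof -
    have "S \<subseteq> D" using S sub by blast
    then have "finite S" using assms(1) by (rule finite_subset)
    obtain c where c: "c = c1 \<or> c = c2" "sum c S \<noteq> 0"
      using S \<open>S \<subseteq> D\<close> c1 c2 unfolding nonvanishing_def by blast
    then have "c x = c y" if "x \<in> S" "y \<in> S" "\<phi> x = \<phi> y" for x y
      using fibres that \<open>S \<subseteq> D\<close> by blast
    then obtain i where "i \<in> \<phi> ` S" "odd (card {e\<in>S. \<phi> e = i})"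
      using sum_nonzero_odd_fibre[OF \<open>finite S\<close> c(2)] by blast
    then show ?thesis using range \<open>S \<subseteq> D\<close> by blast
  qed
  with range show ?thesis by blast
qed

section \<open>Connectivity in forests\<close>

abbreviation conn :: "('e \<Rightarrow> 'v set) \<Rightarrow> 'e set \<Rightarrow> ('v \<times> 'v) set" where
  "conn ends F \<equiv> (adj_rel ends F)\<^sup>*"

lemma conn_sym: "(x, y) \<in> conn ends F \<Longrightarrow> (y, x) \<in> conn ends F"
proof -
  have "sym (adj_rel ends F)" unfolding adj_rel_def sym_def by (auto simp: insert_commute)
  then show "(x, y) \<in> conn ends F \<Longrightarrow> (y, x) \<in> conn ends F" by (rule symD[OF sym_rtrancl])
qed

lemma conn_mono: "F \<subseteq> G \<Longrightarrow> (x, y) \<in> conn ends F \<Longrightarrow> (x, y) \<in> conn ends G"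
proof -
  assume "F \<subseteq> G"
  then have "adj_rel ends F \<subseteq> adj_rel ends G" unfolding adj_rel_def by auto
  then show "(x, y) \<in> conn ends F \<Longrightarrow> (x, y) \<in> conn ends G" using rtrancl_mono by blast
qed

lemma conn_Diff: "(x, y) \<in> conn ends (F - A) \<Longrightarrow> (x, y) \<in> conn ends F"
  by (rule conn_mono[rotated]) blast+

lemma conn_edge: "e \<in> F \<Longrightarrow> ends e = {x, y} \<Longrightarrow> (x, y) \<in> conn ends F"
  unfolding adj_rel_def by (intro r_into_rtrancl) auto

lemma conn_avoid:
  assumes "(z, v) \<in> conn ends F" "\<And>v'. (z, v') \<in> conn ends F \<Longrightarrow> v' \<notin> ends g"
  shows "(z, v) \<in> conn ends (F - {g})"
  using assms(1)
proof (induction rule: rtrancl_induct)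
  case (step y v')
  obtain h where h: "h \<in> F" "ends h = {y, v'}" using step.hyps(2) unfolding adj_rel_def by auto
  have "h \<noteq> g" using assms(2)[OF step.hyps(1)] h(2) by auto
  then have "(y, v') \<in> adj_rel ends (F - {g})" using h unfolding adj_rel_def by auto
  with step.IH show ?case by (rule rtrancl_into_rtrancl)
qed simp

lemma conn_remove_edge:
  assumes "(x, y) \<in> conn ends F" "ends f = {p, q}"
  shows "(x, y) \<in> conn ends (F - {f}) \<or>
    (x, p) \<in> conn ends (F - {f}) \<and> (q, y) \<in> conn ends (F - {f}) \<or>
    (x, q) \<in> conn ends (F - {f}) \<and> (p, y) \<in> conn ends (F - {f})"
  using assms(1)
proof (induction rule: rtrancl_induct)
  case (step y z)
  let ?R = "conn ends (F - {f})"
  obtain h where h: "h \<in> F" "ends h = {y, z}" using step.hyps(2) unfolding adj_rel_def by auto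
  show ?case
  proof (cases "h = f")
    case True
    then have "{y, z} = {p, q}" using h(2) assms(2) by simp
    then consider "y = p" "z = q" | "y = q" "z = p" by (auto simp: doubleton_eq_iff)
    then show ?thesis
    proof cases
      case 1
      from step.IH show ?thesis
        unfolding 1 by (blast intro: rtrancl_trans conn_sym)
    next
      case 2
      from step.IH show ?thesis
        unfolding 2 by (blast intro: rtrancl_trans conn_sym)
    qed
  next
    case False
    then have "(y, z) \<in> adj_rel ends (F - {f})" using h unfolding adj_rel_def by auto
    with step.IH show ?thesis by (blast intro: rtrancl_into_rtrancl)
  qed
qed simp

definition is_path :: "('e \<Rightarrow> 'v set) \<Rightarrow> 'e set \<Rightarrow> 'v list \<Rightarrow> 'e list \<Rightarrow> bool" where
  "is_path ends F vs es \<longleftrightarrow> vs \<noteq> [] \<and> length vs = Suc (length es) \<and> distinct vs \<and> set es \<subseteq> F \<and>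
     (\<forall>i < length es. ends (es ! i) = {vs ! i, vs ! Suc i})"

lemma is_path_prefix:
  assumes "is_path ends F vs es" "j < length vs"
  shows "is_path ends F (take (Suc j) vs) (take j es)"
  using assms set_take_subset[of j es] unfolding is_path_def by auto

lemma is_path_snoc:
  assumes "is_path ends F vs es" "z \<notin> set vs" "g \<in> F" "ends g = {last vs, z}"
  shows "is_path ends F (vs @ [z]) (es @ [g])"
proof -
  have "last vs = vs ! length es" using assms(1) unfolding is_path_def by (simp add: last_conv_nth)
  then show ?thesis using assms unfolding is_path_def by (auto simp: nth_append less_Suc_eq)
qed

lemma conn_imp_path:
  assumes "(x, y) \<in> conn ends F"
  shows "\<exists>vs es. is_path ends F vs es \<and> hd vs = x \<and> last vs = y"
  using assms
proof (induction rule: rtrancl_induct)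
  case base
  have "is_path ends F [x] []" unfolding is_path_def by simp
  then show ?case by force
next
  case (step y z)
  obtain vs es where P: "is_path ends F vs es" "hd vs = x" "last vs = y" using step.IH by blast
  obtain g where g: "g \<in> F" "ends g = {y, z}" using step.hyps(2) unfolding adj_rel_def by auto
  have "vs \<noteq> []" using P(1) unfolding is_path_def by simp
  show ?case
  proof (cases "z \<in> set vs")
    case True
    then obtain j where j: "j < length vs" "vs ! j = z" by (auto simp: in_set_conv_nth)
    have "hd (take (Suc j) vs) = x" using P(2) by simp
    moreover have "last (take (Suc j) vs) = z" using j by (simp add: take_Suc_conv_app_nth)
    ultimately show ?thesis using is_path_prefix[OF P(1) j(1)] by blast
  next
    case False
    then show ?thesis using is_path_snoc[OF P(1) False g(1)] g(2) P(2,3) \<open>vs \<noteq> []\<close> by force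
  qed
qed

lemma is_path_distinct_edges:
  assumes "is_path ends F vs es"
  shows "distinct es"
  unfolding distinct_conv_nth
proof (intro allI impI)
  have len: "length vs = Suc (length es)" and dist: "distinct vs"
    and ed: "\<forall>i < length es. ends (es ! i) = {vs ! i, vs ! Suc i}"
    using assms unfolding is_path_def by auto
  fix i j assume ij: "i < length es" "j < length es" "i \<noteq> j"
  show "es ! i \<noteq> es ! j"
  proof
    assume "es ! i = es ! j"
    then have "{vs ! i, vs ! Suc i} = {vs ! j, vs ! Suc j}" using ed ij by metis
    then have "(i = j \<or> i = Suc j) \<and> (Suc i = j \<or> Suc i = Suc j)"
      using dist ij len by (auto simp: doubleton_eq_iff nth_eq_iff_index_eq)
    then show False using ij(3) by auto
  qed
qed

lemma forest_edge_separates: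
  assumes "acyclic_edges ends T" "f \<in> T" "ends f = {p, q}"
  shows "(p, q) \<notin> conn ends (T - {f})"
proof
  assume "(p, q) \<in> conn ends (T - {f})"
  then obtain vs es where P: "is_path ends (T - {f}) vs es" "hd vs = p" "last vs = q"
    by (blast dest: conn_imp_path)
  have len: "length vs = Suc (length es)" and "vs \<noteq> []" "distinct vs" "set es \<subseteq> T - {f}"
    and ed: "\<forall>i < length es. ends (es ! i) = {vs ! i, vs ! Suc i}"
    using P(1) unfolding is_path_def by auto
  have "vs ! 0 = p" using P(2) \<open>vs \<noteq> []\<close> by (simp add: hd_conv_nth)
  moreover have "vs ! length es = q" using P(3) \<open>vs \<noteq> []\<close> len by (simp add: last_conv_nth)
  ultimately have ends_f: "ends f = {vs ! length es, vs ! 0}" using assms(3) by (simp add: insert_commute)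
  have "is_cycle ends T vs (es @ [f])"
    unfolding is_cycle_def
  proof (intro conjI allI impI)
    show "distinct (es @ [f])" using is_path_distinct_edges[OF P(1)] \<open>set es \<subseteq> T - {f}\<close> by auto
    fix i assume i: "i < length (es @ [f])"
    show "ends ((es @ [f]) ! i) = {vs ! i, vs ! ((i + 1) mod length vs)}"
    proof (cases "i < length es")
      case True
      then show ?thesis using ed len by (simp add: nth_append)
    next
      case False
      then have "i = length es" using i by simp
      then show ?thesis using ends_f len by (simp add: nth_append insert_commute)
    qed
  qed (use len \<open>distinct vs\<close> \<open>set es \<subseteq> T - {f}\<close> assms(2) in auto)
  then show False using assms(1) unfolding acyclic_edges_def by blast
qed

text \<open>In a forest, the far side of \<open>f\<close> as seen from \<open>r\<close>; empty unless \<open>f\<close> lies in the component of \<open>r\<close>.\<close>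

definition cut_off :: "('e \<Rightarrow> 'v set) \<Rightarrow> 'e set \<Rightarrow> 'v \<Rightarrow> 'e \<Rightarrow> 'v set" where
  "cut_off ends T r f = {v. (r, v) \<in> conn ends T \<and> (r, v) \<notin> conn ends (T - {f})}"

lemma cut_off_closed:
  assumes "v \<in> cut_off ends T r f" "(v, v') \<in> conn ends (T - {f})"
  shows "v' \<in> cut_off ends T r f"
proof -
  have rv: "(r, v) \<in> conn ends T" "(r, v) \<notin> conn ends (T - {f})"
    using assms(1) unfolding cut_off_def by auto
  have "(r, v') \<in> conn ends T"
    using rv(1) conn_mono[OF Diff_subset assms(2)] by (rule rtrancl_trans)
  moreover have "(r, v') \<notin> conn ends (T - {f})"
    using rv(2) conn_sym[OF assms(2)] by (meson rtrancl_trans)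
  ultimately show ?thesis unfolding cut_off_def by simp
qed

lemma cut_off_root_side:
  assumes "v \<in> cut_off ends T r f" "ends f = {p, q}"
  shows "(r, p) \<in> conn ends (T - {f}) \<and> (q, v) \<in> conn ends (T - {f}) \<or>
         (r, q) \<in> conn ends (T - {f}) \<and> (p, v) \<in> conn ends (T - {f})"
  using assms conn_remove_edge[of r v ends T f p q] unfolding cut_off_def by blast

lemma cut_off_linked:
  assumes "v \<in> cut_off ends T r f" "v' \<in> cut_off ends T r f" "ends f = {p, q}"
  shows "(v, v') \<in> conn ends (T - {f})"
proof -
  let ?R = "conn ends (T - {f})"
  have "(r, v') \<notin> ?R" using assms(2) unfolding cut_off_def by blast
  then have "\<not> ((r, p) \<in> ?R \<and> (p, v') \<in> ?R)" "\<not> ((r, q) \<in> ?R \<and> (q, v') \<in> ?R)"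
    by (meson rtrancl_trans)+
  then have "(q, v) \<in> ?R \<and> (q, v') \<in> ?R \<or> (p, v) \<in> ?R \<and> (p, v') \<in> ?R"
    using cut_off_root_side[OF assms(1,3)] cut_off_root_side[OF assms(2,3)] by blast
  then show ?thesis by (meson conn_sym rtrancl_trans)
qed

lemma cut_off_linked_avoiding:
  assumes "v \<in> cut_off ends T r f" "v' \<in> cut_off ends T r f" "ends f = {p, q}"
    and "ends g \<inter> cut_off ends T r f = {}"
  shows "(v, v') \<in> conn ends (T - {g})"
proof -
  have "(v, v') \<in> conn ends (T - {f} - {g})"
  proof (rule conn_avoid)
    show "(v, v') \<in> conn ends (T - {f})" by (rule cut_off_linked[OF assms(1-3)])
    show "v'' \<notin> ends g" if "(v, v'') \<in> conn ends (T - {f})" for v''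
      using cut_off_closed[OF assms(1) that] assms(4) by blast
  qed
  then show ?thesis by (rule conn_mono[rotated]) blast
qed

lemma cut_off_all_or_nothing:
  assumes "A \<subseteq> {v. (r, v) \<in> conn ends T}" "\<And>v v'. v \<in> A \<Longrightarrow> v' \<in> A \<Longrightarrow> (v, v') \<in> conn ends (T - {g})"
  shows "A \<subseteq> cut_off ends T r g \<or> A \<inter> cut_off ends T r g = {}"
proof -
  have "v' \<in> cut_off ends T r g" if "v \<in> A \<inter> cut_off ends T r g" "v' \<in> A" for v v'
  proof -
    have "(r, v) \<notin> conn ends (T - {g})" using that(1) unfolding cut_off_def by blast
    moreover have "(v', v) \<in> conn ends (T - {g})" using assms(2) that by blast
    ultimately have "(r, v') \<notin> conn ends (T - {g})" by (meson rtrancl_trans)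
    then show ?thesis using assms(1) that(2) unfolding cut_off_def by blast
  qed
  then show ?thesis by blast
qed

lemma cut_off_edge:
  assumes "g \<in> T" "g \<noteq> f" "ends g = {a, b}" "ends g \<inter> cut_off ends T r f \<noteq> {}"
  shows "ends g \<subseteq> cut_off ends T r f"
proof -
  have "(a, b) \<in> conn ends (T - {f})" using assms(1-3) by (intro conn_edge) auto
  then show ?thesis using assms(3,4) cut_off_closed conn_sym by (metis Int_emptyI insertE singletonD subsetI)
qed

lemma cut_off_nested_or_disjoint:
  assumes "ends f = {p, q}" "ends g \<inter> cut_off ends T r f = {}"
  shows "cut_off ends T r f \<subseteq> cut_off ends T r g \<or> cut_off ends T r f \<inter> cut_off ends T r g = {}"
proof (rule cut_off_all_or_nothing)
  show "cut_off ends T r f \<subseteq> {v. (r, v) \<in> conn ends T}" unfolding cut_off_def by blast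
  show "(v, v') \<in> conn ends (T - {g})" if "v \<in> cut_off ends T r f" "v' \<in> cut_off ends T r f" for v v'
    using cut_off_linked_avoiding[OF that assms] .
qed

lemma cut_off_not_crossing:
  assumes "f \<in> T" "g \<in> T" "f \<noteq> g" and pq: "ends f = {p, q}" and ab: "ends g = {a, b}"
    and meets_f: "ends g \<inter> cut_off ends T r f \<noteq> {}" and meets_g: "ends f \<inter> cut_off ends T r g \<noteq> {}"
  shows False
proof -
  have g_in: "ends g \<subseteq> cut_off ends T r f" using cut_off_edge[OF assms(2) assms(3)[symmetric] ab meets_f] .
  have f_in: "ends f \<subseteq> cut_off ends T r g" using cut_off_edge[OF assms(1,3) pq meets_g] .
  obtain v where "v \<in> cut_off ends T r f" using meets_f by blast
  from cut_off_root_side[OF this pq] obtain c where c: "c \<in> ends f" "(r, c) \<in> conn ends (T - {f})"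
    using pq by blast
  \<comment> \<open>the component of r in T - f misses cut_off f, hence both ends of g\<close>
  have "(r, c) \<in> conn ends (T - {f} - {g})"
  proof (rule conn_avoid[OF c(2)])
    show "v \<notin> ends g" if "(r, v) \<in> conn ends (T - {f})" for v
      using that g_in unfolding cut_off_def by blast
  qed
  then have "(r, c) \<in> conn ends (T - {g})" by (rule conn_mono[rotated]) blast
  then show False using f_in c(1) unfolding cut_off_def by blast
qed

lemma cut_off_laminar:
  assumes "\<forall>f\<in>T. \<exists>p q. ends f = {p, q}"
  shows "laminar (cut_off ends T r ` T)"
  unfolding laminar_def
proof (intro ballI)
  fix A B assume "A \<in> cut_off ends T r ` T" "B \<in> cut_off ends T r ` T"
  then obtain f g where fg: "f \<in> T" "g \<in> T" and AB: "A = cut_off ends T r f" "B = cut_off ends T r g"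
    by blast
  obtain p q a b where pq: "ends f = {p, q}" and ab: "ends g = {a, b}" using assms fg by meson
  consider "ends g \<inter> A = {}" | "ends f \<inter> B = {}" | "f = g"
    | "f \<noteq> g" "ends g \<inter> A \<noteq> {}" "ends f \<inter> B \<noteq> {}" by blast
  then show "A \<subseteq> B \<or> B \<subseteq> A \<or> A \<inter> B = {}"
  proof cases
    case 1
    then show ?thesis using cut_off_nested_or_disjoint[of ends f p q g T r, OF pq] AB by blast
  next
    case 2
    then show ?thesis using cut_off_nested_or_disjoint[of ends g a b f T r, OF ab] AB by blast
  next
    case 3
    then show ?thesis using AB by blast
  next
    case 4
    then show ?thesis using cut_off_not_crossing[OF fg _ pq ab] AB by blast
  qed
qed

section \<open>Fundamental cuts\<close>

lemma graph_edge_ends: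
  assumes "graph V E ends" "e \<in> E"
  shows "ends e \<subseteq> V" "\<exists>p q. ends e = {p, q}"
proof -
  show "ends e \<subseteq> V" using assms unfolding graph_def by blast
  have "card (ends e) = 1 \<or> card (ends e) = 2" using assms unfolding graph_def by blast
  then show "\<exists>p q. ends e = {p, q}"
  proof
    assume "card (ends e) = 1"
    then obtain p where "ends e = {p}" by (rule card_1_singletonE)
    then show ?thesis by blast
  next
    assume "card (ends e) = 2"
    then show ?thesis unfolding card_2_iff by blast
  qed
qed

lemma laminar_preimage:
  assumes "laminar \<A>"
  shows "laminar ((\<lambda>A. {e\<in>D. h e \<in> A}) ` \<A>)"
  unfolding laminar_def
proof (intro ballI)
  fix S S' assume "S \<in> (\<lambda>A. {e\<in>D. h e \<in> A}) ` \<A>" "S' \<in> (\<lambda>A. {e\<in>D. h e \<in> A}) ` \<A>"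
  then obtain A A' where A: "A \<in> \<A>" "A' \<in> \<A>" and S: "S = {e\<in>D. h e \<in> A}" "S' = {e\<in>D. h e \<in> A'}"
    by blast
  from A assms have "A \<subseteq> A' \<or> A' \<subseteq> A \<or> A \<inter> A' = {}" unfolding laminar_def by blast
  then show "S \<subseteq> S' \<or> S' \<subseteq> S \<or> S \<inter> S' = {}" unfolding S by blast
qed

lemma laminar_incident_edges:
  assumes "laminar \<A>" "\<forall>A\<in>\<A>. A \<subseteq> Z" "\<forall>e\<in>D. \<exists>a. ends e \<inter> Z = {a}"
  shows "laminar ((\<lambda>A. {e\<in>D. ends e \<inter> A \<noteq> {}}) ` \<A>)"
proof -
  obtain h where h: "\<forall>e\<in>D. ends e \<inter> Z = {h e}" using bchoice[OF assms(3)] by blast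
  have "ends e \<inter> A \<noteq> {} \<longleftrightarrow> h e \<in> A" if "e \<in> D" "A \<in> \<A>" for e A
  proof -
    have "ends e \<inter> A = ends e \<inter> Z \<inter> A" using assms(2) that(2) by blast
    then show ?thesis using h that(1) by simp
  qed
  then have "(\<lambda>A. {e\<in>D. ends e \<inter> A \<noteq> {}}) ` \<A> = (\<lambda>A. {e\<in>D. h e \<in> A}) ` \<A>"
    by (intro image_cong refl Collect_cong) blast
  then show ?thesis using laminar_preimage[OF assms(1)] by simp
qed

locale forest_edge =
  fixes V :: "'v set" and E :: "'e set" and ends :: "'e \<Rightarrow> 'v set" and T :: "'e set"
    and f0 :: 'e and u :: 'v and w :: 'v
  assumes graph: "graph V E ends" and T_sub: "T \<subseteq> E" and acyclic: "acyclic_edges ends T"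
    and f0: "f0 \<in> T" "ends f0 = {u, w}"
begin

definition X :: "'v set" where "X = {v. (u, v) \<in> conn ends (T - {f0})}"

definition Y :: "'v set" where "Y = {v. (w, v) \<in> conn ends (T - {f0})}"

abbreviation D :: "'e set" where "D \<equiv> fund_cut V E ends T f0 - {f0}"

lemma T_edge_ends: "f \<in> T \<Longrightarrow> \<exists>p q. ends f = {p, q}"
  using graph_edge_ends(2)[OF graph] T_sub by blast

lemma X_Y_disjoint: "X \<inter> Y = {}"
proof (rule ccontr)
  assume "X \<inter> Y \<noteq> {}"
  then obtain v where uv: "(u, v) \<in> conn ends (T - {f0})" and wv: "(w, v) \<in> conn ends (T - {f0})"
    unfolding X_def Y_def by blast
  have "(u, w) \<in> conn ends (T - {f0})" using rtrancl_trans[OF uv conn_sym[OF wv]] .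
  with forest_edge_separates[OF acyclic f0] show False ..
qed

lemma reachable_iff_X_Y: "(u, v) \<in> conn ends T \<longleftrightarrow> v \<in> X \<union> Y"
proof
  assume "(u, v) \<in> conn ends T"
  from conn_remove_edge[OF this f0(2)] show "v \<in> X \<union> Y"
    unfolding X_def Y_def by blast
next
  assume v: "v \<in> X \<union> Y"
  have uw: "(u, w) \<in> conn ends T" using conn_edge[of f0 T ends u w] f0 by blast
  show "(u, v) \<in> conn ends T"
  proof (cases "v \<in> X")
    case True
    then show ?thesis unfolding X_def by (blast intro: conn_Diff)
  next
    case False
    then have "(w, v) \<in> conn ends T" using v unfolding Y_def by (blast intro: conn_Diff)
    with uw show ?thesis by (rule rtrancl_trans)
  qed
qed

lemma D_edge:
  assumes "e \<in> D"
  obtains a b where "e \<in> E" "ends e = {a, b}" "a \<in> X" "b \<in> Y"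
proof -
  have "e \<in> E" "\<exists>p q a b. ends f0 = {p, q} \<and> a \<in> component V ends (T - {f0}) p \<and>
      b \<in> component V ends (T - {f0}) q \<and> ends e = {a, b}"
    using assms unfolding fund_cut_def by auto
  then obtain p q a b where h: "e \<in> E" "ends f0 = {p, q}" "ends e = {a, b}"
    "(p, a) \<in> conn ends (T - {f0})" "(q, b) \<in> conn ends (T - {f0})"
    unfolding component_def by blast
  from h(2) f0(2) consider "p = u" "q = w" | "p = w" "q = u" by (auto simp: doubleton_eq_iff)
  then show thesis
  proof cases
    case 1
    then show thesis using that[of a b] h unfolding X_def Y_def by blast
  next
    case 2
    then show thesis using that[of b a] h unfolding X_def Y_def by (auto simp: insert_commute)
  qed
qed

lemma D_end_unique:
  assumes "e \<in> D" "Z = X \<or> Z = Y"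
  shows "\<exists>a. ends e \<inter> Z = {a}"
proof -
  obtain a b where ab: "ends e = {a, b}" "a \<in> X" "b \<in> Y" using D_edge[OF assms(1)] by metis
  then have "a \<notin> Y" "b \<notin> X" using X_Y_disjoint by blast+
  then have "ends e \<inter> X = {a}" "ends e \<inter> Y = {b}" using ab by auto
  then show ?thesis using assms(2) by blast
qed

lemma finite_D: "finite D"
proof (rule finite_subset)
  show "D \<subseteq> E" unfolding fund_cut_def by blast
  show "finite E" using graph unfolding graph_def by blast
qed

lemma cut_off_side:
  assumes "f \<in> T"
  shows "cut_off ends T u f \<subseteq> X \<or> cut_off ends T u f \<subseteq> Y"
proof -
  let ?C = "cut_off ends T u f"
  have C_sub: "?C \<subseteq> X \<union> Y" using reachable_iff_X_Y unfolding cut_off_def by blast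
  show ?thesis
  proof (cases "f = f0")
    case True
    then have "?C \<inter> X = {}" unfolding cut_off_def X_def by blast
    then show ?thesis using C_sub by blast
  next
    case False
    obtain p q where pq: "ends f = {p, q}" using T_edge_ends[OF assms] by blast
    have "(u, w) \<in> conn ends (T - {f})" using conn_edge[of f0 "T - {f}" ends u w] f0 False by blast
    then have "u \<notin> ?C" "w \<notin> ?C" unfolding cut_off_def by auto
    then have avoid: "ends f0 \<inter> ?C = {}" by (auto simp: f0(2))
    have linked: "(v, v') \<in> conn ends (T - {f0})" if "v \<in> ?C" "v' \<in> ?C" for v v'
      by (rule cut_off_linked_avoiding[OF that pq avoid])
    show ?thesis
    proof (cases "?C \<inter> X = {}")
      case True
      then show ?thesis using C_sub by blast
    next
      case False
      then obtain v where v: "v \<in> ?C" "(u, v) \<in> conn ends (T - {f0})" unfolding X_def by blast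
      have "v' \<in> X" if "v' \<in> ?C" for v'
        unfolding X_def using rtrancl_trans[OF v(2) linked[OF v(1) that]] by simp
      then show ?thesis by blast
    qed
  qed
qed

lemma linked_to_root_if_not_cut_off:
  "a \<in> X \<union> Y \<Longrightarrow> a \<notin> cut_off ends T u f \<Longrightarrow> (u, a) \<in> conn ends (T - {f})"
  using reachable_iff_X_Y unfolding cut_off_def by blast

lemma fund_cut_meets_cut_off:
  assumes f: "f \<in> T" and "e \<in> D" "e \<in> fund_cut V E ends T f"
  shows "ends e \<inter> cut_off ends T u f \<noteq> {}"
proof
  let ?R = "conn ends (T - {f})"
  assume outside: "ends e \<inter> cut_off ends T u f = {}"
  have "\<exists>p q a b. ends f = {p, q} \<and> a \<in> component V ends (T - {f}) p \<and>
      b \<in> component V ends (T - {f}) q \<and> ends e = {a, b}"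
    using assms(3) unfolding fund_cut_def by blast
  then obtain p q a b where h: "ends f = {p, q}" "(p, a) \<in> ?R" "(q, b) \<in> ?R" "ends e = {a, b}"
    unfolding component_def by blast
  have "ends e \<subseteq> X \<union> Y" using D_edge[OF assms(2)] by (metis Un_iff insert_subset empty_subsetI)
  then have "(u, a) \<in> ?R" "(u, b) \<in> ?R"
    using linked_to_root_if_not_cut_off outside h(4) by blast+
  then have "(p, q) \<in> ?R" using h(2,3) by (meson conn_sym rtrancl_trans)
  with forest_edge_separates[OF acyclic f h(1)] show False ..
qed

lemma fund_cut_if_meets_cut_off:
  assumes f: "f \<in> T" and "e \<in> D" "ends e \<inter> cut_off ends T u f \<noteq> {}"
  shows "e \<in> fund_cut V E ends T f"
proof -
  let ?C = "cut_off ends T u f" and ?R = "conn ends (T - {f})"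
  obtain a b where ab: "e \<in> E" "ends e = {a, b}" "a \<in> X" "b \<in> Y" using D_edge[OF assms(2)] by metis
  obtain c d where cd: "ends e = {c, d}" "c \<in> ?C" using assms(3) ab(2) by auto
  have "\<not> (a \<in> ?C \<and> b \<in> ?C)" using cut_off_side[OF f] ab(3,4) X_Y_disjoint by blast
  then have "d \<notin> ?C" "d \<in> X \<union> Y" using cd ab(2-4) by (auto simp: doubleton_eq_iff)
  then have ud: "(u, d) \<in> ?R" by (intro linked_to_root_if_not_cut_off)
  have V: "c \<in> V" "d \<in> V" using graph_edge_ends(1)[OF graph ab(1)] cd(1) by auto
  have joins: ?thesis if "ends f = {s, t}" "(u, s) \<in> ?R" "(t, c) \<in> ?R" for s t
  proof -
    have "(s, d) \<in> ?R" using conn_sym[OF that(2)] ud by (rule rtrancl_trans)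
    then have "c \<in> component V ends (T - {f}) t" "d \<in> component V ends (T - {f}) s"
      using that(3) V unfolding component_def by auto
    moreover have "ends f = {t, s}" using that(1) by (simp add: insert_commute)
    ultimately show ?thesis using ab(1) cd(1) unfolding fund_cut_def by blast
  qed
  obtain p q where pq: "ends f = {p, q}" using T_edge_ends[OF f] by blast
  then have qp: "ends f = {q, p}" by (simp add: insert_commute)
  from cut_off_root_side[OF cd(2) pq] show ?thesis
  proof
    assume "(u, p) \<in> ?R \<and> (q, c) \<in> ?R"
    then show ?thesis using joins[OF pq] by blast
  next
    assume "(u, q) \<in> ?R \<and> (p, c) \<in> ?R"
    then show ?thesis using joins[OF qp] by blast
  qed
qed

lemma fund_cut_inter_D:
  "f \<in> T \<Longrightarrow> fund_cut V E ends T f \<inter> D = {e\<in>D. ends e \<inter> cut_off ends T u f \<noteq> {}}"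
  using fund_cut_meets_cut_off fund_cut_if_meets_cut_off by blast

definition cut_family :: "'v set \<Rightarrow> 'e set set" where
  "cut_family Z = (\<lambda>A. {e\<in>D. ends e \<inter> A \<noteq> {}}) ` {A \<in> cut_off ends T u ` T. A \<subseteq> Z} - {{}}"

lemma cut_family_laminar:
  assumes "Z = X \<or> Z = Y"
  shows "laminar (cut_family Z)"
proof -
  have "laminar (cut_off ends T u ` T)" by (rule cut_off_laminar) (use T_edge_ends in blast)
  then have "laminar {A \<in> cut_off ends T u ` T. A \<subseteq> Z}" by (rule laminar_subset) blast
  moreover have "\<forall>A\<in>{A \<in> cut_off ends T u ` T. A \<subseteq> Z}. A \<subseteq> Z" by blast
  moreover have "\<forall>e\<in>D. \<exists>a. ends e \<inter> Z = {a}" using D_end_unique assms by blast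
  ultimately have "laminar ((\<lambda>A. {e\<in>D. ends e \<inter> A \<noteq> {}}) ` {A \<in> cut_off ends T u ` T. A \<subseteq> Z})"
    by (rule laminar_incident_edges)
  then show ?thesis unfolding cut_family_def by (rule laminar_subset) blast
qed

lemma fund_cut_in_cut_family:
  assumes f: "f \<in> T" and ne: "fund_cut V E ends T f \<inter> D \<noteq> {}"
  shows "fund_cut V E ends T f \<inter> D \<in> cut_family X \<union> cut_family Y"
proof -
  let ?C = "cut_off ends T u f" and ?edges = "\<lambda>A. {e\<in>D. ends e \<inter> A \<noteq> {}}"
  have eq: "fund_cut V E ends T f \<inter> D = ?edges ?C" by (rule fund_cut_inter_D[OF f])
  have "?edges ?C \<in> cut_family Z" if "?C \<subseteq> Z" for Z
  proof -
    have "?C \<in> {A \<in> cut_off ends T u ` T. A \<subseteq> Z}" using f that by blast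
    then have "?edges ?C \<in> ?edges ` {A \<in> cut_off ends T u ` T. A \<subseteq> Z}" by (rule imageI)
    then show ?thesis using ne unfolding eq cut_family_def by blast
  qed
  then show ?thesis using cut_off_side[OF f] unfolding eq by blast
qed

lemma odd_colouring_of_fundamental_cut:
  "\<exists>\<phi> :: 'e \<Rightarrow> nat. (\<forall>e\<in>D. \<phi> e \<in> {1..9}) \<and>
     (\<forall>f\<in>T. fund_cut V E ends T f \<inter> D \<noteq> {} \<longrightarrow>
        (\<exists>i\<in>{1..8}. odd (card {e \<in> fund_cut V E ends T f \<inter> D. \<phi> e = i})))"
proof -
  have "laminar (cut_family X)" "laminar (cut_family Y)" using cut_family_laminar by blast+
  moreover have "\<forall>S\<in>cut_family X \<union> cut_family Y. S \<subseteq> D" unfolding cut_family_def by blast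
  moreover have "{} \<notin> cut_family X" "{} \<notin> cut_family Y" by (simp_all add: cut_family_def)
  ultimately have "\<exists>\<phi>. (\<forall>e\<in>D. \<phi> e \<in> {1..8::nat}) \<and>
      (\<forall>S\<in>cut_family X \<union> cut_family Y. \<exists>i\<in>{1..8}. odd (card {e\<in>S. \<phi> e = i}))"
    by (rule laminar_pair_odd_colouring[OF finite_D])
  then obtain \<phi> :: "'e \<Rightarrow> nat" where \<phi>: "\<forall>e\<in>D. \<phi> e \<in> {1..8}"
    "\<forall>S\<in>cut_family X \<union> cut_family Y. \<exists>i\<in>{1..8}. odd (card {e\<in>S. \<phi> e = i})"
    by blast
  show ?thesis
  proof (intro exI[of _ \<phi>] conjI ballI impI)
    fix e assume "e \<in> D"
    then have "\<phi> e \<in> {1..8}" using \<phi>(1) by blast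
    then show "\<phi> e \<in> {1..9}" by simp
  next
    fix f assume "f \<in> T" "fund_cut V E ends T f \<inter> D \<noteq> {}"
    then have "fund_cut V E ends T f \<inter> D \<in> cut_family X \<union> cut_family Y" by (rule fund_cut_in_cut_family)
    then show "\<exists>i\<in>{1..8}. odd (card {e \<in> fund_cut V E ends T f \<inter> D. \<phi> e = i})"
      using \<phi>(2) by blast
  qed
qed

end

theorem lemma5p1:
  fixes V :: "'v set" and E :: "'e set" and ends :: "'e \<Rightarrow> 'v set"
    and T :: "'e set" and f0 :: 'e
  assumes "graph V E ends"
    and "spanning_forest V E ends T"
    and "f0 \<in> T"
  shows "\<exists>\<phi> :: 'e \<Rightarrow> nat.
           (\<forall>e \<in> fund_cut V E ends T f0 - {f0}. \<phi> e \<in> {1..9}) \<and>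
           (\<forall>f \<in> T. fund_cut V E ends T f \<inter> (fund_cut V E ends T f0 - {f0}) \<noteq> {} \<longrightarrow>
              (\<exists>i \<in> {1..8}. odd (card {e \<in> fund_cut V E ends T f \<inter> (fund_cut V E ends T f0 - {f0}).
                                          \<phi> e = i})))"
proof -
  have T: "T \<subseteq> E" "acyclic_edges ends T" using assms(2) unfolding spanning_forest_def by auto
  then obtain u w where "ends f0 = {u, w}" using graph_edge_ends(2)[OF assms(1)] assms(3) by blast
  with assms(1,3) T interpret forest_edge V E ends T f0 u w by unfold_locales
  show ?thesis by (rule odd_colouring_of_fundamental_cut)
qed

end
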